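(* Let $(x,y,p)$ be an optimal solution of the RMP and let $(\alpha,\beta,\gamma,\delta,\mu,\phi,\psi)$ be an optimal solution of the DRMP (so both have the same objective value). Then: (a) There exists a cost-invariant lifting of $(\alpha,\beta,\gamma,\delta,\mu,\phi,\psi)$ that is fully compensating and feasible for the DMP if and only if the characteristic lifting $(\alpha,\check\beta,\gamma,\check\delta,\mu,\phi,\psi)$ is fully compensating and feasible for the DMP. (b) Suppose the following three families of inequalities hold: 1. $\bar c_{b,l,m}\ge 0$ for all $b\in\mathcal B$, $l\in L(b)$, $m\in\mathcal M\setminus M(b,l)$; 2. for all $l\in\mathcal L'\setminus\bigcap_{b\in\mathcal B}L(b)$: $$-\sum_{b\in\mathcal B:\ l\notin L(b)}\Bigl(\min_{m\in\mathcal M}\bar c_{b,l,m}\Bigr)^-\ \ge\ \sum_{b\in\mathcal B:\ l\in L(b)}\beta_{b,l}-\gamma-\delta_l+\chi_l\mu;$$ 3. for all $l\in\mathcal L\setminus\mathcal L'$: $$-\sum_{b\in\mathcal B}\Bigl(\min_{m\in\mathcal M}\bar c_{b,l,m}\Bigr)^-+\Bigl(\min_{b\in\mathcal B,\,m\in\mathcal M}\bar c_{b,l,m}\Bigr)^+\ \ge\ -\gamma+\mu.$$ Then the vector $(\bar x,\bar y,\bar p)$ obtained from $(x,y,p)$ by setting all variables of the MP that are absent from the RMP to zero is an optimal solution of the MP. Moreover, these three families hold if and only if the characteristic lifting is fully compensating and feasible for the DMP; consequently, if any one of these inequalities is violated, then no cost-invariant lifting of $(\alpha,\beta,\gamma,\delta,\mu,\phi,\psi)$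 is both fully compensating and feasible for the DMP.
   Context: Let $\mathcal B$ (branches) and $\mathcal S$ (sizes) be finite nonempty sets, $\mathcal M\subset\mathbb N$ a finite nonempty set of multiplicities, and $\mathcal L\subset\mathbb N^{\mathcal S}$ a finite nonempty set of lot-types; for $l\in\mathcal L$ write $|l|:=\sum_{s\in\mathcal S}l_s$. Let costs $c_{b,l,m}\ge 0$ ($b\in\mathcal B,l\in\mathcal L,m\in\mathcal M$), an integer $k\ge 0$, reals $\underline I\le\overline I$ and a constant $P>0$ be given. Let $\mathcal L''\subseteq\mathcal L'\subseteq\mathcal L$, for each $b\in\mathcal B$ let $L(b)\subseteq\mathcal L'$, and for each $b$ and $l\in L(b)$ let $M(b,l)\subseteq\mathcal M$ be nonempty. Put $\chi_l:=1$ if $l\notin\mathcal L''$ and $\chi_l:=0$ if $l\in\mathcal L''$. For real $t$, $(t)^+:=\max\{t,0\}$ and $(t)^-:=\max\{-t,0\}$. Master problem (MP): the linear program in variables $x_{b,l,m}\ge0$ ($b\in\mathcal B,l\in\mathcal L,m\in\mathcal M$), $y_l\ge0$ ($l\in\mathcal L$), $p\ge 0$: minimize $\sum_{b,l,m}c_{b,l,m}x_{b,l,m}+Pp$ subject to ($\alpha_b$) $\sum_{l,m}x_{b,l,m}=1$ for all $b$; ($\beta_{b,l}$) $y_l-\sum_m x_{b,l,m}\ge 0$ for all $b,l$; ($\gamma$) $-\sum_l y_l\ge -k$; ($\delta_l$) $\sum_{b,m}x_{b,l,m}-y_l\ge0$ for all $l$; ($\mu$) $\sum_{l\in\mathcal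 L\setminus\mathcal L''}y_l+p\ge1$; ($\phi$) $\sum_{b,l,m}m|l|x_{b,l,m}\ge\underline I$; ($\psi$) $-\sum_{b,l,m}m|l|x_{b,l,m}\ge-\overline I$. The symbol in parentheses names the dual variable of each constraint. Restricted master problem (RMP): the same LP but containing only the variables $x_{b,l,m}$ with $l\in L(b)$, $m\in M(b,l)$, the variables $y_l$ with $l\in\mathcal L'$, and $p$; only the $\beta_{b,l}$-constraints with $l\in L(b)$ and the $\delta_l$-constraints with $l\in\mathcal L'$ are kept, and all sums are restricted to the present variables. Dual master problem (DMP): variables $\alpha_b\in\mathbb R$, $\beta_{b,l}\ge0$ (all $b\in\mathcal B,l\in\mathcal L$), $\gamma\ge0$, $\delta_l\ge0$ (all $l\in\mathcal L$), $\mu\ge0$, $\phi,\psi\ge0$; maximize $\sum_b\alpha_b-k\gamma+\underline I\phi-\overline I\psi+\mu$ subject to the $x$-constraints $\alpha_b-\beta_{b,l}+\delta_l+m|l|(\phi-\psi)\le c_{b,l,m}$ for all $b,l,m$, the $y$-constraints $\sum_{b\in\mathcal B}\beta_{b,l}-\gamma-\delta_l+\chi_l\mu\le 0$ for all $l\in\mathcal L$, and the $p$-constraint $\mu\le P$. The dual restricted master problem (DRMP) is the LP dual of the RMP: variables $\alpha_b$, $\beta_{b,l}$ ($l\in L(b)$), $\gamma$, $\delta_l$ ($l\in\mathcal L'$), $\mu,\phi,\psi$ with the same sign conditions and objective, $x$-constraints only for $l\in L(b)$, $m\in M(b,l)$, $y$-constraints $\sum_{b:\,l\in L(b)}\beta_{b,l}-\gamma-\delta_l+\chi_l\mu\le0$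 for $l\in\mathcal L'$, and $\mu\le P$. Given a DRMP solution $(\alpha,\beta,\gamma,\delta,\mu,\phi,\psi)$: its canonical lifting sets $\bar\beta_{b,l}:=\beta_{b,l}$ if $l\in L(b)$ and $0$ otherwise, $\bar\delta_l:=\delta_l$ if $l\in\mathcal L'$ and $0$ otherwise. The (uncompensated) reduced cost is $\bar c_{b,l,m}:=c_{b,l,m}-\alpha_b+\bar\beta_{b,l}-\bar\delta_l-m|l|(\phi-\psi)$ for all $b\in\mathcal B,l\in\mathcal L,m\in\mathcal M$. A cost-invariant lifting is any assignment $(\hat\alpha,\hat\beta,\hat\gamma,\hat\delta,\hat\mu,\hat\phi,\hat\psi)$ of all DMP variables that coincides with $(\alpha,\beta,\gamma,\delta,\mu,\phi,\psi)$ on all DRMP components and whose DMP objective equals the DRMP objective of $(\alpha,\ldots,\psi)$. It is fully compensating if it satisfies all $x$-constraints of the DMP. The characteristic lifting is $(\alpha,\check\beta,\gamma,\check\delta,\mu,\phi,\psi)$ with $\check\beta_{b,l}:=\beta_{b,l}$ if $l\in L(b)$ and $\check\beta_{b,l}:=(\min_{m\in\mathcal M}\bar c_{b,l,m})^-$ if $l\in\mathcal L\setminus L(b)$; $\check\delta_l:=\delta_l$ if $l\in\mathcal L'$ and $\check\delta_l:=(\min_{b\in\mathcal B,m\in\mathcal M}\bar c_{b,l,m})^+$ if $l\in\mathcal L\setminus\mathcal L'$. *)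

theory Defs
  imports Complex_Main
begin

(* Lot-types are vectors in N^S, modelled as functions 's => nat; |l| = sum over S. *)
definition lsize :: "'s set \<Rightarrow> ('s \<Rightarrow> nat) \<Rightarrow> real" where
  "lsize Ss l = real (\<Sum>s\<in>Ss. l s)"

definition posp :: "real \<Rightarrow> real" where "posp t = max t 0"
definition negp :: "real \<Rightarrow> real" where "negp t = max (- t) 0"

definition chi :: "('s \<Rightarrow> nat) set \<Rightarrow> ('s \<Rightarrow> nat) \<Rightarrow> real" where
  "chi L2 l = (if l \<in> L2 then 0 else 1)"

definition mp_obj ::
  "'b set \<Rightarrow> ('s \<Rightarrow> nat) set \<Rightarrow> nat set \<Rightarrow> ('b \<Rightarrow> ('s \<Rightarrow> nat) \<Rightarrow> nat \<Rightarrow> real) \<Rightarrow> real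
   \<Rightarrow> ('b \<Rightarrow> ('s \<Rightarrow> nat) \<Rightarrow> nat \<Rightarrow> real) \<Rightarrow> real \<Rightarrow> real" where
  "mp_obj Bs Ls Ms c P x p =
     (\<Sum>b\<in>Bs. \<Sum>l\<in>Ls. \<Sum>m\<in>Ms. c b l m * x b l m) + P * p"

definition mp_feasible ::
  "'b set \<Rightarrow> 's set \<Rightarrow> ('s \<Rightarrow> nat) set \<Rightarrow> nat set \<Rightarrow> nat \<Rightarrow> real \<Rightarrow> real \<Rightarrow> ('s \<Rightarrow> nat) set
   \<Rightarrow> ('b \<Rightarrow> ('s \<Rightarrow> nat) \<Rightarrow> nat \<Rightarrow> real) \<Rightarrow> (('s \<Rightarrow> nat) \<Rightarrow> real) \<Rightarrow> real \<Rightarrow> bool" where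
  "mp_feasible Bs Ss Ls Ms k Ilo Ihi L2 x y p \<longleftrightarrow>
     (\<forall>b\<in>Bs. \<forall>l\<in>Ls. \<forall>m\<in>Ms. x b l m \<ge> 0) \<and> (\<forall>l\<in>Ls. y l \<ge> 0) \<and> p \<ge> 0 \<and>
     (\<forall>b\<in>Bs. (\<Sum>l\<in>Ls. \<Sum>m\<in>Ms. x b l m) = 1) \<and>
     (\<forall>b\<in>Bs. \<forall>l\<in>Ls. y l - (\<Sum>m\<in>Ms. x b l m) \<ge> 0) \<and>
     - (\<Sum>l\<in>Ls. y l) \<ge> - real k \<and>
     (\<forall>l\<in>Ls. (\<Sum>b\<in>Bs. \<Sum>m\<in>Ms. x b l m) - y l \<ge> 0) \<and>
     (\<Sum>l\<in>Ls - L2. y l) + p \<ge> 1 \<and>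
     (\<Sum>b\<in>Bs. \<Sum>l\<in>Ls. \<Sum>m\<in>Ms. real m * lsize Ss l * x b l m) \<ge> Ilo \<and>
     - (\<Sum>b\<in>Bs. \<Sum>l\<in>Ls. \<Sum>m\<in>Ms. real m * lsize Ss l * x b l m) \<ge> - Ihi"

definition mp_optimal where
  "mp_optimal Bs Ss Ls Ms c k Ilo Ihi P L2 x y p \<longleftrightarrow>
     mp_feasible Bs Ss Ls Ms k Ilo Ihi L2 x y p \<and>
     (\<forall>x' y' p'. mp_feasible Bs Ss Ls Ms k Ilo Ihi L2 x' y' p' \<longrightarrow>
        mp_obj Bs Ls Ms c P x p \<le> mp_obj Bs Ls Ms c P x' p')"

(* ---------- Restricted master problem ----------
   Variables are total functions, but only the entries x b l m with b \<in> Bs, l \<in> Lb b,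
   m \<in> Mb b l, the entries y l with l \<in> L1, and p are RMP variables; all other
   entries are ignored. *)
definition rmp_obj where
  "rmp_obj Bs c P Lb Mb x p =
     (\<Sum>b\<in>Bs. \<Sum>l\<in>Lb b. \<Sum>m\<in>Mb b l. c b l m * x b l m) + P * p"

definition rmp_feasible where
  "rmp_feasible Bs Ss k Ilo Ihi L1 L2 Lb Mb x y p \<longleftrightarrow>
     (\<forall>b\<in>Bs. \<forall>l\<in>Lb b. \<forall>m\<in>Mb b l. x b l m \<ge> 0) \<and> (\<forall>l\<in>L1. y l \<ge> 0) \<and> (p::real) \<ge> 0 \<and>
     (\<forall>b\<in>Bs. (\<Sum>l\<in>Lb b. \<Sum>m\<in>Mb b l. x b l m) = 1) \<and>
     (\<forall>b\<in>Bs. \<forall>l\<in>Lb b. y l - (\<Sum>m\<in>Mb b l. x b l m) \<ge> 0) \<and>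
     - (\<Sum>l\<in>L1. y l) \<ge> - real (k::nat) \<and>
     (\<forall>l\<in>L1. (\<Sum>b\<in>{b\<in>Bs. l \<in> Lb b}. \<Sum>m\<in>Mb b l. x b l m) - y l \<ge> 0) \<and>
     (\<Sum>l\<in>L1 - L2. y l) + p \<ge> 1 \<and>
     (\<Sum>b\<in>Bs. \<Sum>l\<in>Lb b. \<Sum>m\<in>Mb b l. real m * lsize Ss l * x b l m) \<ge> Ilo \<and>
     - (\<Sum>b\<in>Bs. \<Sum>l\<in>Lb b. \<Sum>m\<in>Mb b l. real m * lsize Ss l * x b l m) \<ge> - Ihi"

definition rmp_optimal where
  "rmp_optimal Bs Ss c k Ilo Ihi P L1 L2 Lb Mb x y p \<longleftrightarrow>
     rmp_feasible Bs Ss k Ilo Ihi L1 L2 Lb Mb x y p \<and>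
     (\<forall>x' y' p'. rmp_feasible Bs Ss k Ilo Ihi L1 L2 Lb Mb x' y' p' \<longrightarrow>
        rmp_obj Bs c P Lb Mb x p \<le> rmp_obj Bs c P Lb Mb x' p')"

definition xbar where
  "xbar Bs Lb Mb x = (\<lambda>b l m. if b \<in> Bs \<and> l \<in> Lb b \<and> m \<in> Mb b l then x b l m else 0)"

definition ybar where
  "ybar L1 y = (\<lambda>l. if l \<in> L1 then y l else (0::real))"

definition dmp_obj where
  "dmp_obj Bs k Ilo Ihi \<alpha> \<gamma> \<mu> \<phi> \<psi> =
     (\<Sum>b\<in>Bs. \<alpha> b) - real (k::nat) * \<gamma> + Ilo * \<phi> - Ihi * \<psi> + (\<mu>::real)"

(* "fully compensating": all x-constraints of the DMP hold *)
definition dmp_xcons where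
  "dmp_xcons Bs Ss Ls Ms c \<alpha> \<beta> \<delta> \<phi> \<psi> \<longleftrightarrow>
     (\<forall>b\<in>Bs. \<forall>l\<in>Ls. \<forall>m\<in>Ms.
        \<alpha> b - \<beta> b l + \<delta> l + real m * lsize Ss l * (\<phi> - \<psi>) \<le> c b l m)"

definition dmp_feasible where
  "dmp_feasible Bs Ss Ls Ms c P L2 \<alpha> \<beta> \<gamma> \<delta> \<mu> \<phi> \<psi> \<longleftrightarrow>
     (\<forall>b\<in>Bs. \<forall>l\<in>Ls. \<beta> b l \<ge> 0) \<and> \<gamma> \<ge> 0 \<and> (\<forall>l\<in>Ls. \<delta> l \<ge> 0) \<and>
     \<mu> \<ge> 0 \<and> \<phi> \<ge> 0 \<and> \<psi> \<ge> 0 \<and>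
     dmp_xcons Bs Ss Ls Ms c \<alpha> \<beta> \<delta> \<phi> \<psi> \<and>
     (\<forall>l\<in>Ls. (\<Sum>b\<in>Bs. \<beta> b l) - \<gamma> - \<delta> l + chi L2 l * \<mu> \<le> 0) \<and>
     \<mu> \<le> (P::real)"

definition drmp_feasible where
  "drmp_feasible Bs Ss c P L1 L2 Lb Mb \<alpha> \<beta> \<gamma> \<delta> \<mu> \<phi> \<psi> \<longleftrightarrow>
     (\<forall>b\<in>Bs. \<forall>l\<in>Lb b. \<beta> b l \<ge> 0) \<and> \<gamma> \<ge> 0 \<and> (\<forall>l\<in>L1. \<delta> l \<ge> 0) \<and>
     \<mu> \<ge> 0 \<and> \<phi> \<ge> 0 \<and> \<psi> \<ge> 0 \<and>
     (\<forall>b\<in>Bs. \<forall>l\<in>Lb b. \<forall>m\<in>Mb b l.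
        \<alpha> b - \<beta> b l + \<delta> l + real m * lsize Ss l * (\<phi> - \<psi>) \<le> c b l m) \<and>
     (\<forall>l\<in>L1. (\<Sum>b\<in>{b\<in>Bs. l \<in> Lb b}. \<beta> b l) - \<gamma> - \<delta> l + chi L2 l * \<mu> \<le> 0) \<and>
     \<mu> \<le> (P::real)"

definition drmp_optimal where
  "drmp_optimal Bs Ss c k Ilo Ihi P L1 L2 Lb Mb \<alpha> \<beta> \<gamma> \<delta> \<mu> \<phi> \<psi> \<longleftrightarrow>
     drmp_feasible Bs Ss c P L1 L2 Lb Mb \<alpha> \<beta> \<gamma> \<delta> \<mu> \<phi> \<psi> \<and>
     (\<forall>\<alpha>' \<beta>' \<gamma>' \<delta>' \<mu>' \<phi>' \<psi>'.
        drmp_feasible Bs Ss c P L1 L2 Lb Mb \<alpha>' \<beta>' \<gamma>' \<delta>' \<mu>' \<phi>' \<psi>' \<longrightarrow>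
        dmp_obj Bs k Ilo Ihi \<alpha>' \<gamma>' \<mu>' \<phi>' \<psi>' \<le> dmp_obj Bs k Ilo Ihi \<alpha> \<gamma> \<mu> \<phi> \<psi>)"

definition betabar where
  "betabar Lb \<beta> = (\<lambda>b l. if l \<in> Lb b then \<beta> b l else (0::real))"

definition deltabar where
  "deltabar L1 \<delta> = (\<lambda>l. if l \<in> L1 then \<delta> l else (0::real))"

definition redcost where
  "redcost Ss c L1 Lb \<alpha> \<beta> \<delta> \<phi> \<psi> b l m =
     c b l m - \<alpha> b + betabar Lb \<beta> b l - deltabar L1 \<delta> l - real m * lsize Ss l * (\<phi> - \<psi>)"

definition cost_invariant_lifting where
  "cost_invariant_lifting Bs k Ilo Ihi L1 Lb \<alpha> \<beta> \<gamma> \<delta> \<mu> \<phi> \<psi> \<alpha>' \<beta>' \<gamma>' \<delta>' \<mu>' \<phi>' \<psi>' \<longleftrightarrow>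
     (\<forall>b\<in>Bs. \<alpha>' b = \<alpha> b) \<and> (\<forall>b\<in>Bs. \<forall>l\<in>Lb b. \<beta>' b l = \<beta> b l) \<and> \<gamma>' = \<gamma> \<and>
     (\<forall>l\<in>L1. \<delta>' l = \<delta> l) \<and> \<mu>' = \<mu> \<and> \<phi>' = \<phi> \<and> \<psi>' = \<psi> \<and>
     dmp_obj Bs k Ilo Ihi \<alpha>' \<gamma>' \<mu>' \<phi>' \<psi>' = dmp_obj Bs k Ilo Ihi \<alpha> \<gamma> \<mu> \<phi> \<psi>"

definition betacheck where
  "betacheck Ss Ms c L1 Lb \<alpha> \<beta> \<delta> \<phi> \<psi> = (\<lambda>b l.
     if l \<in> Lb b then \<beta> b l
     else negp (Min ((\<lambda>m. redcost Ss c L1 Lb \<alpha> \<beta> \<delta> \<phi> \<psi> b l m) ` Ms)))"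

definition deltacheck where
  "deltacheck Bs Ss Ms c L1 Lb \<alpha> \<beta> \<delta> \<phi> \<psi> = (\<lambda>l.
     if l \<in> L1 then \<delta> l
     else posp (Min ((\<lambda>(b, m). redcost Ss c L1 Lb \<alpha> \<beta> \<delta> \<phi> \<psi> b l m) ` (Bs \<times> Ms))))"

end

theory Submission
  imports Defs
begin

text \<open>For a lifting \<open>(\<beta>', \<delta>')\<close> of the DRMP solution, the DMP x-constraint at \<open>(b, l, m)\<close>
  reads \<open>betabar b l - deltabar l - redcost b l m \<le> \<beta>' b l - \<delta>' l\<close>. For \<open>l \<in> L(b)\<close>
  nothing is lifted and it says \<open>redcost b l m \<ge> 0\<close>, which is family 1 beyond \<open>M(b, l)\<close>;
  otherwise it is a lower bound on \<open>\<beta>' b l\<close>, and together with \<open>\<beta>' \<ge> 0\<close> the characteristic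
  values are the cheapest way to meet it. Hence the characteristic lifting minimises the left-hand
  side of every y-constraint among all fully compensating feasible liftings (for a lot outside
  \<open>L'\<close> the branch attaining the least reduced cost pays for any choice of \<open>\<delta>' l\<close>), and its
  y-constraints are exactly families 2 and 3. When it is feasible its DMP objective is the RMP
  optimal value, so by weak duality the zero extension of the RMP optimum is optimal for the MP.\<close>


lemma posp_minus_negp: "posp t - negp t = t"
  by (simp add: posp_def negp_def)

lemma posp_nonneg: "0 \<le> posp t" and negp_nonneg: "0 \<le> negp t"
  by (simp_all add: posp_def negp_def)

lemma negp_le_iff: "negp t \<le> s \<longleftrightarrow> 0 \<le> s \<and> - t \<le> s"
  by (auto simp: negp_def)

lemma posp_mono: "t \<le> s \<Longrightarrow> posp t \<le> posp s"
  by (simp add: posp_def)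

lemma sum_chi_mult:
  "(\<Sum>l\<in>Ls. chi L2 l * f l) = (\<Sum>l\<in>Ls - L2. f l)" if "finite Ls"
proof -
  have "(\<Sum>l\<in>Ls. chi L2 l * f l) = (\<Sum>l\<in>Ls. if l \<in> - L2 then f l else 0)"
    by (intro sum.cong) (auto simp: chi_def)
  also have "\<dots> = (\<Sum>l\<in>Ls - L2. f l)"
    using that by (simp add: sum.inter_restrict Diff_eq)
  finally show ?thesis .
qed

lemma dmp_feasible_xcons:
  "dmp_feasible Bs Ss Ls Ms c P L2 \<alpha> \<beta> \<gamma> \<delta> \<mu> \<phi> \<psi> \<Longrightarrow> dmp_xcons Bs Ss Ls Ms c \<alpha> \<beta> \<delta> \<phi> \<psi>"
  by (simp add: dmp_feasible_def)

lemma weak_duality: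
  assumes fin: "finite Bs" "finite Ls" "finite Ms"
    and primal: "mp_feasible Bs Ss Ls Ms k Ilo Ihi L2 x y p"
    and dual: "dmp_feasible Bs Ss Ls Ms c P L2 \<alpha> \<beta> \<gamma> \<delta> \<mu> \<phi> \<psi>"
  shows "dmp_obj Bs k Ilo Ihi \<alpha> \<gamma> \<mu> \<phi> \<psi> \<le> mp_obj Bs Ls Ms c P x p"
proof -
  define w where "w l m = real m * lsize Ss l" for l m
  define X where "X b l = (\<Sum>m\<in>Ms. x b l m)" for b l
  define W where "W = (\<Sum>b\<in>Bs. \<Sum>l\<in>Ls. \<Sum>m\<in>Ms. w l m * x b l m)"
  note pf = primal[unfolded mp_feasible_def, folded w_def X_def W_def]
  note df = dual[unfolded dmp_feasible_def dmp_xcons_def, folded w_def]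
  have "(\<Sum>b\<in>Bs. \<Sum>l\<in>Ls. \<Sum>m\<in>Ms. (\<alpha> b - \<beta> b l + \<delta> l + w l m * (\<phi> - \<psi>)) * x b l m)
      \<le> (\<Sum>b\<in>Bs. \<Sum>l\<in>Ls. \<Sum>m\<in>Ms. c b l m * x b l m)"
    using pf df by (intro sum_mono mult_right_mono) auto
  also have "(\<Sum>b\<in>Bs. \<Sum>l\<in>Ls. \<Sum>m\<in>Ms. (\<alpha> b - \<beta> b l + \<delta> l + w l m * (\<phi> - \<psi>)) * x b l m)
     = (\<Sum>b\<in>Bs. \<alpha> b * (\<Sum>l\<in>Ls. X b l))
       + (\<Sum>l\<in>Ls. \<delta> l * (\<Sum>b\<in>Bs. X b l) - (\<Sum>b\<in>Bs. \<beta> b l * X b l)) + (\<phi> - \<psi>) * W"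
    unfolding X_def W_def
    by (simp add: algebra_simps sum.distrib sum_subtractf sum_distrib_left sum_distrib_right
        sum.swap[of _ Bs Ls])
  finally have lagrange: "(\<Sum>b\<in>Bs. \<alpha> b) + (\<Sum>l\<in>Ls. \<delta> l * (\<Sum>b\<in>Bs. X b l) - (\<Sum>b\<in>Bs. \<beta> b l * X b l))
      + (\<phi> - \<psi>) * W \<le> (\<Sum>b\<in>Bs. \<Sum>l\<in>Ls. \<Sum>m\<in>Ms. c b l m * x b l m)"
    using pf by simp
  have "(\<Sum>l\<in>Ls. (chi L2 l * \<mu> - \<gamma>) * y l) \<le> (\<Sum>l\<in>Ls. (\<delta> l - (\<Sum>b\<in>Bs. \<beta> b l)) * y l)"
    using pf df by (intro sum_mono mult_right_mono) auto
  also have "\<dots> \<le> (\<Sum>l\<in>Ls. \<delta> l * (\<Sum>b\<in>Bs. X b l) - (\<Sum>b\<in>Bs. \<beta> b l * X b l))"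
  proof (intro sum_mono)
    fix l assume l: "l \<in> Ls"
    have "\<delta> l * y l \<le> \<delta> l * (\<Sum>b\<in>Bs. X b l)"
      using pf df l by (intro mult_left_mono) auto
    moreover have "(\<Sum>b\<in>Bs. \<beta> b l * X b l) \<le> (\<Sum>b\<in>Bs. \<beta> b l * y l)"
      using pf df l by (intro sum_mono mult_left_mono) auto
    ultimately show "(\<delta> l - (\<Sum>b\<in>Bs. \<beta> b l)) * y l
        \<le> \<delta> l * (\<Sum>b\<in>Bs. X b l) - (\<Sum>b\<in>Bs. \<beta> b l * X b l)"
      by (simp add: algebra_simps sum_distrib_left)
  qed
  finally have lots: "\<mu> * (\<Sum>l\<in>Ls - L2. y l) - \<gamma> * (\<Sum>l\<in>Ls. y l)
      \<le> (\<Sum>l\<in>Ls. \<delta> l * (\<Sum>b\<in>Bs. X b l) - (\<Sum>b\<in>Bs. \<beta> b l * X b l))"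
    using sum_chi_mult[OF fin(2), of L2 "\<lambda>l. \<mu> * y l"]
    by (simp add: left_diff_distrib sum_subtractf sum_distrib_left mult.assoc)
  have "\<mu> * (1 - p) \<le> \<mu> * (\<Sum>l\<in>Ls - L2. y l)" "\<gamma> * (\<Sum>l\<in>Ls. y l) \<le> \<gamma> * real k"
    "\<phi> * Ilo \<le> \<phi> * W" "\<psi> * W \<le> \<psi> * Ihi" "\<mu> * p \<le> P * p"
    using pf df by (auto intro: mult_left_mono mult_right_mono simp: W_def w_def)
  then show ?thesis
    using lagrange lots unfolding dmp_obj_def mp_obj_def by (simp add: algebra_simps)
qed

lemma sum_xbar_multiplicities:
  fixes F :: "nat \<Rightarrow> real"
  assumes "finite Ms" "b \<in> Bs" "l \<in> Lb b \<Longrightarrow> Mb b l \<subseteq> Ms"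
  shows "(\<Sum>m\<in>Ms. F m * xbar Bs Lb Mb x b l m)
    = (if l \<in> Lb b then \<Sum>m\<in>Mb b l. F m * x b l m else 0)"
proof -
  have "(\<Sum>m\<in>Ms. F m * xbar Bs Lb Mb x b l m)
      = (\<Sum>m\<in>Ms. if m \<in> {m. l \<in> Lb b \<and> m \<in> Mb b l} then F m * x b l m else 0)"
    using assms(2) by (intro sum.cong) (auto simp: xbar_def)
  also have "\<dots> = (\<Sum>m\<in>Ms \<inter> {m. l \<in> Lb b \<and> m \<in> Mb b l}. F m * x b l m)"
    using assms(1) by (rule sum.inter_restrict[symmetric])
  also have "\<dots> = (if l \<in> Lb b then \<Sum>m\<in>Mb b l. F m * x b l m else 0)"
    using assms(3) by (auto intro: sum.cong)
  finally show ?thesis .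
qed

lemma sum_xbar:
  fixes F :: "'l \<Rightarrow> nat \<Rightarrow> real"
  assumes "finite Ls" "finite Ms" "b \<in> Bs" "Lb b \<subseteq> Ls" "\<forall>l\<in>Lb b. Mb b l \<subseteq> Ms"
  shows "(\<Sum>l\<in>Ls. \<Sum>m\<in>Ms. F l m * xbar Bs Lb Mb x b l m)
    = (\<Sum>l\<in>Lb b. \<Sum>m\<in>Mb b l. F l m * x b l m)"
proof -
  have "(\<Sum>l\<in>Ls. \<Sum>m\<in>Ms. F l m * xbar Bs Lb Mb x b l m)
      = (\<Sum>l\<in>Ls. if l \<in> Lb b then \<Sum>m\<in>Mb b l. F l m * x b l m else 0)"
    using assms by (intro sum.cong refl sum_xbar_multiplicities) auto
  also have "\<dots> = (\<Sum>l\<in>Lb b. \<Sum>m\<in>Mb b l. F l m * x b l m)"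
    using assms(1,4) by (simp add: sum.inter_restrict[symmetric] Int_absorb1)
  finally show ?thesis .
qed

lemma sum_ybar: "finite Ls \<Longrightarrow> (\<Sum>l\<in>Ls. ybar L1 y l) = (\<Sum>l\<in>Ls \<inter> L1. y l)"
  unfolding ybar_def by (rule sum.inter_restrict[symmetric])

lemma mp_obj_zero_extension:
  assumes "finite Ls" "finite Ms" "\<forall>b\<in>Bs. Lb b \<subseteq> Ls" "\<forall>b\<in>Bs. \<forall>l\<in>Lb b. Mb b l \<subseteq> Ms"
  shows "mp_obj Bs Ls Ms c P (xbar Bs Lb Mb x) p = rmp_obj Bs c P Lb Mb x p"
  unfolding mp_obj_def rmp_obj_def using assms by (simp add: sum_xbar)

lemma mp_feasible_zero_extension:
  assumes fin: "finite Bs" "finite Ls" "finite Ms"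
    and lots: "L2 \<subseteq> L1" "L1 \<subseteq> Ls" "\<forall>b\<in>Bs. Lb b \<subseteq> L1"
    and mults: "\<forall>b\<in>Bs. \<forall>l\<in>Lb b. Mb b l \<subseteq> Ms"
    and feasible: "rmp_feasible Bs Ss k Ilo Ihi L1 L2 Lb Mb x y p"
  shows "mp_feasible Bs Ss Ls Ms k Ilo Ihi L2 (xbar Bs Lb Mb x) (ybar L1 y) p"
proof -
  note r = feasible[unfolded rmp_feasible_def]
  have lot_sum: "(\<Sum>m\<in>Ms. xbar Bs Lb Mb x b l m)
      = (if l \<in> Lb b then \<Sum>m\<in>Mb b l. x b l m else 0)" if "b \<in> Bs" for b l
    using sum_xbar_multiplicities[OF fin(3) that, where F = "\<lambda>_. 1" and l = l] mults that
    by simp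
  have branch_sum: "(\<Sum>l\<in>Ls. \<Sum>m\<in>Ms. F l m * xbar Bs Lb Mb x b l m)
      = (\<Sum>l\<in>Lb b. \<Sum>m\<in>Mb b l. F l m * x b l m)" if "b \<in> Bs" for b F
    using lots mults that by (intro sum_xbar[OF fin(2,3) that]) auto
  have lot_branch_sum: "(\<Sum>b\<in>Bs. \<Sum>m\<in>Ms. xbar Bs Lb Mb x b l m)
      = (\<Sum>b\<in>{b\<in>Bs. l \<in> Lb b}. \<Sum>m\<in>Mb b l. x b l m)" for l
    using fin(1) by (simp add: lot_sum sum.inter_filter)
  have "Ls \<inter> L1 = L1" "(Ls - L2) \<inter> L1 = L1 - L2"
    using lots by auto
  then have y_sums: "(\<Sum>l\<in>Ls. ybar L1 y l) = (\<Sum>l\<in>L1. y l)"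
      "(\<Sum>l\<in>Ls - L2. ybar L1 y l) = (\<Sum>l\<in>L1 - L2. y l)"
    using fin(2) by (simp_all add: sum_ybar)
  have unused_lot: "{b\<in>Bs. l \<in> Lb b} = {}" if "l \<notin> L1" for l
    using lots that by blast
  show ?thesis
    unfolding mp_feasible_def
  proof (intro conjI)
    show "\<forall>b\<in>Bs. \<forall>l\<in>Ls. \<forall>m\<in>Ms. 0 \<le> xbar Bs Lb Mb x b l m"
      using r by (simp add: xbar_def)
    show "\<forall>l\<in>Ls. 0 \<le> ybar L1 y l"
      using r by (simp add: ybar_def)
    show "\<forall>b\<in>Bs. (\<Sum>l\<in>Ls. \<Sum>m\<in>Ms. xbar Bs Lb Mb x b l m) = 1"
      using r branch_sum[where F = "\<lambda>_ _. 1"] by simp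
    show "\<forall>b\<in>Bs. \<forall>l\<in>Ls. 0 \<le> ybar L1 y l - (\<Sum>m\<in>Ms. xbar Bs Lb Mb x b l m)"
      using r lots by (auto simp: lot_sum ybar_def)
    show "\<forall>l\<in>Ls. 0 \<le> (\<Sum>b\<in>Bs. \<Sum>m\<in>Ms. xbar Bs Lb Mb x b l m) - ybar L1 y l"
      using r by (auto simp: lot_branch_sum ybar_def unused_lot)
    show "0 \<le> p" "- real k \<le> - (\<Sum>l\<in>Ls. ybar L1 y l)" "1 \<le> (\<Sum>l\<in>Ls - L2. ybar L1 y l) + p"
      using r by (simp_all add: y_sums)
    show "Ilo \<le> (\<Sum>b\<in>Bs. \<Sum>l\<in>Ls. \<Sum>m\<in>Ms. real m * lsize Ss l * xbar Bs Lb Mb x b l m)"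
      "- Ihi \<le> - (\<Sum>b\<in>Bs. \<Sum>l\<in>Ls. \<Sum>m\<in>Ms. real m * lsize Ss l * xbar Bs Lb Mb x b l m)"
      using r branch_sum[where F = "\<lambda>l m. real m * lsize Ss l"] by simp_all
  qed
qed

lemma mp_optimal_zero_extension:
  assumes fin: "finite Bs" "finite Ls" "finite Ms"
    and lots: "L2 \<subseteq> L1" "L1 \<subseteq> Ls" "\<forall>b\<in>Bs. Lb b \<subseteq> L1"
    and mults: "\<forall>b\<in>Bs. \<forall>l\<in>Lb b. Mb b l \<subseteq> Ms"
    and primal: "rmp_feasible Bs Ss k Ilo Ihi L1 L2 Lb Mb x y p"
    and dual: "dmp_feasible Bs Ss Ls Ms c P L2 \<alpha> \<beta> \<gamma> \<delta> \<mu> \<phi> \<psi>"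
    and same_value: "rmp_obj Bs c P Lb Mb x p = dmp_obj Bs k Ilo Ihi \<alpha> \<gamma> \<mu> \<phi> \<psi>"
  shows "mp_optimal Bs Ss Ls Ms c k Ilo Ihi P L2 (xbar Bs Lb Mb x) (ybar L1 y) p"
proof -
  have "mp_obj Bs Ls Ms c P (xbar Bs Lb Mb x) p = dmp_obj Bs k Ilo Ihi \<alpha> \<gamma> \<mu> \<phi> \<psi>"
    using lots mults by (subst mp_obj_zero_extension[OF fin(2,3)]) (auto simp: same_value)
  then show ?thesis
    unfolding mp_optimal_def
    using mp_feasible_zero_extension[OF fin lots mults primal] weak_duality[OF fin _ dual] by simp
qed

locale drmp_feasible_point =
  fixes Bs :: "'b set" and Ss :: "'s set" and Ls :: "('s \<Rightarrow> nat) set" and Ms :: "nat set"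
    and c :: "'b \<Rightarrow> ('s \<Rightarrow> nat) \<Rightarrow> nat \<Rightarrow> real" and P :: real
    and L1 L2 :: "('s \<Rightarrow> nat) set" and Lb :: "'b \<Rightarrow> ('s \<Rightarrow> nat) set"
    and Mb :: "'b \<Rightarrow> ('s \<Rightarrow> nat) \<Rightarrow> nat set"
    and \<alpha> :: "'b \<Rightarrow> real" and \<beta> :: "'b \<Rightarrow> ('s \<Rightarrow> nat) \<Rightarrow> real" and \<gamma> :: real
    and \<delta> :: "('s \<Rightarrow> nat) \<Rightarrow> real" and \<mu> \<phi> \<psi> :: real
  assumes finite_Bs: "finite Bs" and Bs_nonempty: "Bs \<noteq> {}"
    and finite_Ms: "finite Ms" and Ms_nonempty: "Ms \<noteq> {}"
    and lots_nested: "L2 \<subseteq> L1" "L1 \<subseteq> Ls" "\<forall>b\<in>Bs. Lb b \<subseteq> L1"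
    and drmp_feasible: "drmp_feasible Bs Ss c P L1 L2 Lb Mb \<alpha> \<beta> \<gamma> \<delta> \<mu> \<phi> \<psi>"
begin

abbreviation "rc \<equiv> redcost Ss c L1 Lb \<alpha> \<beta> \<delta> \<phi> \<psi>"
abbreviation "min_rc b l \<equiv> Min ((\<lambda>m. rc b l m) ` Ms)"
abbreviation "min_rc_lot l \<equiv> Min ((\<lambda>(b, m). rc b l m) ` (Bs \<times> Ms))"
abbreviation "\<beta>c \<equiv> betacheck Ss Ms c L1 Lb \<alpha> \<beta> \<delta> \<phi> \<psi>"
abbreviation "\<delta>c \<equiv> deltacheck Bs Ss Ms c L1 Lb \<alpha> \<beta> \<delta> \<phi> \<psi>"

definition missing_multiplicity_condition :: bool where
  "missing_multiplicity_condition \<longleftrightarrow> (\<forall>b\<in>Bs. \<forall>l\<in>Lb b. \<forall>m\<in>Ms - Mb b l. rc b l m \<ge> 0)"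

definition partial_lot_condition :: "('s \<Rightarrow> nat) \<Rightarrow> bool" where
  "partial_lot_condition l \<longleftrightarrow>
     - (\<Sum>b\<in>{b\<in>Bs. l \<notin> Lb b}. negp (min_rc b l))
       \<ge> (\<Sum>b\<in>{b\<in>Bs. l \<in> Lb b}. \<beta> b l) - \<gamma> - \<delta> l + chi L2 l * \<mu>"

definition missing_lot_condition :: "('s \<Rightarrow> nat) \<Rightarrow> bool" where
  "missing_lot_condition l \<longleftrightarrow>
     - (\<Sum>b\<in>Bs. negp (min_rc b l)) + posp (min_rc_lot l) \<ge> - \<gamma> + \<mu>"

lemma lot_in_L1: "b \<in> Bs \<Longrightarrow> l \<in> Lb b \<Longrightarrow> l \<in> L1"
  using lots_nested by blast

lemma redcost_restricted_nonneg:
  assumes "b \<in> Bs" "l \<in> Lb b" "m \<in> Mb b l"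
  shows "0 \<le> rc b l m"
proof -
  have "\<alpha> b - \<beta> b l + \<delta> l + real m * lsize Ss l * (\<phi> - \<psi>) \<le> c b l m"
    using drmp_feasible assms unfolding drmp_feasible_def by blast
  then show ?thesis
    using assms lot_in_L1[OF assms(1,2)] by (simp add: redcost_def betabar_def deltabar_def)
qed

lemma min_rc_le: "m \<in> Ms \<Longrightarrow> min_rc b l \<le> rc b l m"
  using finite_Ms by simp

lemma min_rc_lot_le_min_rc:
  assumes "b \<in> Bs"
  shows "min_rc_lot l \<le> min_rc b l"
proof -
  have "min_rc b l \<in> (\<lambda>m. rc b l m) ` Ms"
    using finite_Ms Ms_nonempty by (intro Min_in) auto
  then obtain m where "m \<in> Ms" "min_rc b l = rc b l m"
    by blast
  then show ?thesis
    using assms finite_Bs finite_Ms by (auto intro!: Min_le)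
qed

lemma min_rc_lot_attained: "\<exists>b\<in>Bs. min_rc b l = min_rc_lot l"
proof -
  have "min_rc_lot l \<in> (\<lambda>(b, m). rc b l m) ` (Bs \<times> Ms)"
    using finite_Bs finite_Ms Bs_nonempty Ms_nonempty by (intro Min_in) auto
  then obtain b m where bm: "b \<in> Bs" "m \<in> Ms" "min_rc_lot l = rc b l m"
    by auto
  then have "min_rc b l = min_rc_lot l"
    using min_rc_le[of m b l] min_rc_lot_le_min_rc[of b l] by simp
  then show ?thesis
    using bm(1) by blast
qed

lemma x_constraint_iff_redcost:
  "\<alpha> b - \<beta>' b l + \<delta>' l + real m * lsize Ss l * (\<phi> - \<psi>) \<le> c b l m \<longleftrightarrow>
     betabar Lb \<beta> b l - deltabar L1 \<delta> l - rc b l m \<le> \<beta>' b l - \<delta>' l"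
  by (auto simp: redcost_def)

lemma lifting_x_constraints_iff:
  assumes "b \<in> Bs" and "l \<in> Lb b \<Longrightarrow> \<beta>' b l = \<beta> b l" and "l \<in> L1 \<Longrightarrow> \<delta>' l = \<delta> l"
  shows "(\<forall>m\<in>Ms. \<alpha> b - \<beta>' b l + \<delta>' l + real m * lsize Ss l * (\<phi> - \<psi>) \<le> c b l m) \<longleftrightarrow>
    (if l \<in> Lb b then \<forall>m\<in>Ms. 0 \<le> rc b l m
     else (if l \<in> L1 then 0 else \<delta>' l) - \<beta>' b l \<le> min_rc b l)"
proof (cases "l \<in> Lb b")
  case True
  then show ?thesis
    using assms lot_in_L1[OF assms(1) True]
    by (simp add: x_constraint_iff_redcost betabar_def deltabar_def)
next
  case False
  then show ?thesis
    using assms finite_Ms Ms_nonempty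
    by (auto simp: x_constraint_iff_redcost betabar_def deltabar_def)
qed

lemma char_lifting_x_constraints_row:
  assumes "b \<in> Bs"
  shows "(\<forall>m\<in>Ms. \<alpha> b - \<beta>c b l + \<delta>c l + real m * lsize Ss l * (\<phi> - \<psi>) \<le> c b l m) \<longleftrightarrow>
    (l \<in> Lb b \<longrightarrow> (\<forall>m\<in>Ms - Mb b l. 0 \<le> rc b l m))"
proof -
  have "- negp (min_rc b l) \<le> min_rc b l"
    by (simp add: negp_def)
  moreover have "posp (min_rc_lot l) - negp (min_rc b l) \<le> min_rc b l"
    using posp_mono[OF min_rc_lot_le_min_rc[OF assms, of l]] posp_minus_negp[of "min_rc b l"] by linarith
  ultimately show ?thesis
    using lifting_x_constraints_iff[OF assms, where \<beta>' = \<beta>c and \<delta>' = \<delta>c and l = l]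
      redcost_restricted_nonneg[OF assms]
    by (auto simp: betacheck_def deltacheck_def)
qed

lemma char_lifting_x_constraints_iff:
  "dmp_xcons Bs Ss Ls Ms c \<alpha> \<beta>c \<delta>c \<phi> \<psi> \<longleftrightarrow> missing_multiplicity_condition"
  using char_lifting_x_constraints_row lots_nested
  unfolding dmp_xcons_def missing_multiplicity_condition_def by blast

lemma sum_betacheck:
  "(\<Sum>b\<in>Bs. \<beta>c b l)
     = (\<Sum>b\<in>{b\<in>Bs. l \<in> Lb b}. \<beta> b l) + (\<Sum>b\<in>{b\<in>Bs. l \<notin> Lb b}. negp (min_rc b l))"
  using finite_Bs by (simp add: betacheck_def sum.If_cases Int_def)

lemma char_lifting_y_constraint_present_lot_iff:
  assumes "l \<in> L1"
  shows "(\<Sum>b\<in>Bs. \<beta>c b l) - \<gamma> - \<delta>c l + chi L2 l * \<mu> \<le> 0 \<longleftrightarrow>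
    (l \<notin> (\<Inter>b\<in>Bs. Lb b) \<longrightarrow> partial_lot_condition l)"
proof (cases "l \<in> (\<Inter>b\<in>Bs. Lb b)")
  case True
  then have "(\<Sum>b\<in>{b\<in>Bs. l \<notin> Lb b}. negp (min_rc b l)) = 0"
    by (intro sum.neutral) blast
  moreover have "(\<Sum>b\<in>{b\<in>Bs. l \<in> Lb b}. \<beta> b l) - \<gamma> - \<delta> l + chi L2 l * \<mu> \<le> 0"
    using drmp_feasible assms unfolding drmp_feasible_def by blast
  ultimately show ?thesis
    using True assms by (simp add: sum_betacheck deltacheck_def)
next
  case False
  then show ?thesis
    using assms by (auto simp: sum_betacheck deltacheck_def partial_lot_condition_def)
qed

lemma char_lifting_y_constraint_missing_lot_iff:
  assumes "l \<notin> L1"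
  shows "(\<Sum>b\<in>Bs. \<beta>c b l) - \<gamma> - \<delta>c l + chi L2 l * \<mu> \<le> 0 \<longleftrightarrow> missing_lot_condition l"
proof -
  have "(\<Sum>b\<in>Bs. \<beta>c b l) = (\<Sum>b\<in>Bs. negp (min_rc b l))"
    using assms lot_in_L1 by (intro sum.cong refl) (auto simp: betacheck_def)
  moreover have "chi L2 l = 1"
    using assms lots_nested by (auto simp: chi_def)
  ultimately show ?thesis
    using assms by (auto simp: deltacheck_def missing_lot_condition_def)
qed

lemma char_lifting_y_constraints_iff:
  "(\<forall>l\<in>Ls. (\<Sum>b\<in>Bs. \<beta>c b l) - \<gamma> - \<delta>c l + chi L2 l * \<mu> \<le> 0) \<longleftrightarrow>
    (\<forall>l\<in>L1 - (\<Inter>b\<in>Bs. Lb b). partial_lot_condition l) \<and> (\<forall>l\<in>Ls - L1. missing_lot_condition l)"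
  (is "_ \<longleftrightarrow> ?rhs")
proof -
  have "(\<forall>l\<in>Ls. (\<Sum>b\<in>Bs. \<beta>c b l) - \<gamma> - \<delta>c l + chi L2 l * \<mu> \<le> 0) \<longleftrightarrow>
      (\<forall>l\<in>Ls. (l \<in> L1 \<longrightarrow> l \<notin> (\<Inter>b\<in>Bs. Lb b) \<longrightarrow> partial_lot_condition l) \<and>
        (l \<notin> L1 \<longrightarrow> missing_lot_condition l))"
    by (intro ball_cong refl)
      (metis char_lifting_y_constraint_present_lot_iff char_lifting_y_constraint_missing_lot_iff)
  also have "\<dots> \<longleftrightarrow> ?rhs"
    using lots_nested(2) by auto
  finally show ?thesis .
qed

lemma char_lifting_nonneg: "b \<in> Bs \<Longrightarrow> 0 \<le> \<beta>c b l" "0 \<le> \<delta>c l"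
proof -
  have "\<forall>b\<in>Bs. \<forall>l\<in>Lb b. 0 \<le> \<beta> b l" "\<forall>l\<in>L1. 0 \<le> \<delta> l"
    using drmp_feasible unfolding drmp_feasible_def by blast+
  then show "b \<in> Bs \<Longrightarrow> 0 \<le> \<beta>c b l" "0 \<le> \<delta>c l"
    by (simp_all add: betacheck_def deltacheck_def negp_nonneg posp_nonneg)
qed

lemma char_lifting_feasible_iff:
  "dmp_feasible Bs Ss Ls Ms c P L2 \<alpha> \<beta>c \<gamma> \<delta>c \<mu> \<phi> \<psi> \<longleftrightarrow>
    missing_multiplicity_condition \<and> (\<forall>l\<in>L1 - (\<Inter>b\<in>Bs. Lb b). partial_lot_condition l) \<and>
    (\<forall>l\<in>Ls - L1. missing_lot_condition l)"
proof -
  have "0 \<le> \<gamma>" "0 \<le> \<mu>" "0 \<le> \<phi>" "0 \<le> \<psi>" "\<mu> \<le> P"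
    using drmp_feasible unfolding drmp_feasible_def by blast+
  then show ?thesis
    unfolding dmp_feasible_def char_lifting_x_constraints_iff char_lifting_y_constraints_iff
    using char_lifting_nonneg by blast
qed

lemma char_lifting_cost_invariant:
  "cost_invariant_lifting Bs k Ilo Ihi L1 Lb \<alpha> \<beta> \<gamma> \<delta> \<mu> \<phi> \<psi> \<alpha> \<beta>c \<gamma> \<delta>c \<mu> \<phi> \<psi>"
  by (simp add: cost_invariant_lifting_def betacheck_def deltacheck_def)

context
  fixes k Ilo Ihi \<alpha>' \<beta>' \<gamma>' \<delta>' \<mu>' \<phi>' \<psi>'
  assumes lifting: "cost_invariant_lifting Bs k Ilo Ihi L1 Lb \<alpha> \<beta> \<gamma> \<delta> \<mu> \<phi> \<psi> \<alpha>' \<beta>' \<gamma>' \<delta>' \<mu>' \<phi>' \<psi>'"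
    and lifting_feasible: "dmp_feasible Bs Ss Ls Ms c P L2 \<alpha>' \<beta>' \<gamma>' \<delta>' \<mu>' \<phi>' \<psi>'"
begin

lemma lifting_x_constraints_row:
  assumes "b \<in> Bs" "l \<in> Ls"
  shows "if l \<in> Lb b then \<forall>m\<in>Ms. 0 \<le> rc b l m
    else (if l \<in> L1 then 0 else \<delta>' l) - \<beta>' b l \<le> min_rc b l"
proof -
  have "\<forall>m\<in>Ms. \<alpha> b - \<beta>' b l + \<delta>' l + real m * lsize Ss l * (\<phi> - \<psi>) \<le> c b l m"
    using lifting lifting_feasible assms
    unfolding cost_invariant_lifting_def dmp_feasible_def dmp_xcons_def by auto
  then show ?thesis
    using lifting assms(1) lifting_x_constraints_iff
    unfolding cost_invariant_lifting_def by auto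
qed

lemma lifting_missing_multiplicity_condition: missing_multiplicity_condition
  using lifting_x_constraints_row lots_nested unfolding missing_multiplicity_condition_def by fastforce

lemma char_lifting_minimal:
  assumes l: "l \<in> Ls"
  shows "(\<Sum>b\<in>Bs. \<beta>c b l) - \<delta>c l \<le> (\<Sum>b\<in>Bs. \<beta>' b l) - \<delta>' l"
proof -
  have nonneg: "\<forall>b\<in>Bs. 0 \<le> \<beta>' b l" "0 \<le> \<delta>' l"
    using lifting_feasible l unfolding dmp_feasible_def by auto
  have negp_le: "negp (min_rc b l) \<le> \<beta>' b l" if "b \<in> Bs" "l \<notin> Lb b" for b
    using lifting_x_constraints_row[OF that(1) l] that nonneg by (auto simp: negp_le_iff split: if_splits)
  show ?thesis
  proof (cases "l \<in> L1")
    case True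
    have "(\<Sum>b\<in>Bs. \<beta>c b l) \<le> (\<Sum>b\<in>Bs. \<beta>' b l)"
    proof (rule sum_mono)
      fix b assume b: "b \<in> Bs"
      show "\<beta>c b l \<le> \<beta>' b l"
        using lifting b negp_le[OF b] unfolding cost_invariant_lifting_def betacheck_def by auto
    qed
    moreover have "\<delta>c l = \<delta>' l"
      using lifting True unfolding cost_invariant_lifting_def deltacheck_def by simp
    ultimately show ?thesis
      by simp
  next
    case False
    have missing: "l \<notin> Lb b" if "b \<in> Bs" for b
      using False lot_in_L1 that by blast
    obtain b0 where b0: "b0 \<in> Bs" "min_rc b0 l = min_rc_lot l"
      using min_rc_lot_attained by blast
    have "(\<Sum>b\<in>Bs. \<beta>c b l) = (\<Sum>b\<in>Bs. negp (min_rc b l))"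
      using missing by (intro sum.cong refl) (simp add: betacheck_def)
    also have "\<dots> = negp (min_rc_lot l) + (\<Sum>b\<in>Bs - {b0}. negp (min_rc b l))"
      using b0 by (simp add: sum.remove[OF finite_Bs b0(1)])
    finally have "(\<Sum>b\<in>Bs. \<beta>c b l) - \<delta>c l = (\<Sum>b\<in>Bs - {b0}. negp (min_rc b l)) - min_rc b0 l"
      using False posp_minus_negp[of "min_rc_lot l"] b0(2) by (simp add: deltacheck_def)
    also have "\<dots> \<le> (\<Sum>b\<in>Bs - {b0}. \<beta>' b l) + \<beta>' b0 l - \<delta>' l"
    proof -
      have "(\<Sum>b\<in>Bs - {b0}. negp (min_rc b l)) \<le> (\<Sum>b\<in>Bs - {b0}. \<beta>' b l)"
        using negp_le missing by (intro sum_mono) auto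
      moreover have "\<delta>' l - \<beta>' b0 l \<le> min_rc b0 l"
        using lifting_x_constraints_row[OF b0(1) l] missing[OF b0(1)] False by simp
      ultimately show ?thesis
        by linarith
    qed
    also have "\<dots> = (\<Sum>b\<in>Bs. \<beta>' b l) - \<delta>' l"
      by (simp add: sum.remove[OF finite_Bs b0(1)])
    finally show ?thesis .
  qed
qed

lemma lifting_imp_char_lifting_feasible: "dmp_feasible Bs Ss Ls Ms c P L2 \<alpha> \<beta>c \<gamma> \<delta>c \<mu> \<phi> \<psi>"
proof -
  have "(\<Sum>b\<in>Bs. \<beta>c b l) - \<gamma> - \<delta>c l + chi L2 l * \<mu> \<le> 0" if "l \<in> Ls" for l
  proof -
    have "(\<Sum>b\<in>Bs. \<beta>' b l) - \<gamma>' - \<delta>' l + chi L2 l * \<mu>' \<le> 0"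
      using lifting_feasible that unfolding dmp_feasible_def by blast
    then show ?thesis
      using char_lifting_minimal[OF that] lifting unfolding cost_invariant_lifting_def by simp
  qed
  moreover have "0 \<le> \<gamma>" "0 \<le> \<mu>" "0 \<le> \<phi>" "0 \<le> \<psi>" "\<mu> \<le> P"
    using drmp_feasible unfolding drmp_feasible_def by blast+
  ultimately show ?thesis
    unfolding dmp_feasible_def char_lifting_x_constraints_iff
    using lifting_missing_multiplicity_condition char_lifting_nonneg by blast
qed

end

lemma compensating_lifting_exists_iff:
  "(\<exists>\<alpha>' \<beta>' \<gamma>' \<delta>' \<mu>' \<phi>' \<psi>'.
      cost_invariant_lifting Bs k Ilo Ihi L1 Lb \<alpha> \<beta> \<gamma> \<delta> \<mu> \<phi> \<psi> \<alpha>' \<beta>' \<gamma>' \<delta>' \<mu>' \<phi>' \<psi>' \<and>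
      dmp_xcons Bs Ss Ls Ms c \<alpha>' \<beta>' \<delta>' \<phi>' \<psi>' \<and>
      dmp_feasible Bs Ss Ls Ms c P L2 \<alpha>' \<beta>' \<gamma>' \<delta>' \<mu>' \<phi>' \<psi>')
    \<longleftrightarrow> dmp_feasible Bs Ss Ls Ms c P L2 \<alpha> \<beta>c \<gamma> \<delta>c \<mu> \<phi> \<psi>"
  (is "?lift \<longleftrightarrow> ?char")
proof
  assume ?char
  with char_lifting_cost_invariant[of k Ilo Ihi] show ?lift
    by (intro exI[of _ \<alpha>] exI[of _ \<beta>c] exI[of _ \<gamma>] exI[of _ \<delta>c] exI[of _ \<mu>] exI[of _ \<phi>]
        exI[of _ \<psi>] conjI dmp_feasible_xcons)
qed (use lifting_imp_char_lifting_feasible in blast)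

end

theorem theorem1:
  fixes Bs :: "'b set" and Ss :: "'s set" and Ls :: "('s \<Rightarrow> nat) set" and Ms :: "nat set"
    and c :: "'b \<Rightarrow> ('s \<Rightarrow> nat) \<Rightarrow> nat \<Rightarrow> real" and k :: nat and Ilo Ihi P :: real
    and L1 L2 :: "('s \<Rightarrow> nat) set" and Lb :: "'b \<Rightarrow> ('s \<Rightarrow> nat) set"
    and Mb :: "'b \<Rightarrow> ('s \<Rightarrow> nat) \<Rightarrow> nat set"
    and x :: "'b \<Rightarrow> ('s \<Rightarrow> nat) \<Rightarrow> nat \<Rightarrow> real" and y :: "('s \<Rightarrow> nat) \<Rightarrow> real" and p :: real
    and \<alpha> :: "'b \<Rightarrow> real" and \<beta> :: "'b \<Rightarrow> ('s \<Rightarrow> nat) \<Rightarrow> real" and \<gamma> :: real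
    and \<delta> :: "('s \<Rightarrow> nat) \<Rightarrow> real" and \<mu> \<phi> \<psi> :: real
  assumes fin: "finite Bs" "Bs \<noteq> {}" "finite Ss" "Ss \<noteq> {}" "finite Ms" "Ms \<noteq> {}"
      "finite Ls" "Ls \<noteq> {}"
    and cost_nonneg: "\<forall>b\<in>Bs. \<forall>l\<in>Ls. \<forall>m\<in>Ms. c b l m \<ge> 0"
    and I_le: "Ilo \<le> Ihi" and P_pos: "P > 0"
    and L_sub: "L2 \<subseteq> L1" "L1 \<subseteq> Ls" "\<forall>b\<in>Bs. Lb b \<subseteq> L1"
    and M_sub: "\<forall>b\<in>Bs. \<forall>l\<in>Lb b. Mb b l \<subseteq> Ms \<and> Mb b l \<noteq> {}"
    and primal_opt: "rmp_optimal Bs Ss c k Ilo Ihi P L1 L2 Lb Mb x y p"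
    and dual_opt: "drmp_optimal Bs Ss c k Ilo Ihi P L1 L2 Lb Mb \<alpha> \<beta> \<gamma> \<delta> \<mu> \<phi> \<psi>"
    and same_value: "rmp_obj Bs c P Lb Mb x p = dmp_obj Bs k Ilo Ihi \<alpha> \<gamma> \<mu> \<phi> \<psi>"
  shows
    "let rc = redcost Ss c L1 Lb \<alpha> \<beta> \<delta> \<phi> \<psi>;
         \<beta>c = betacheck Ss Ms c L1 Lb \<alpha> \<beta> \<delta> \<phi> \<psi>;
         \<delta>c = deltacheck Bs Ss Ms c L1 Lb \<alpha> \<beta> \<delta> \<phi> \<psi>;
         charOK = (dmp_xcons Bs Ss Ls Ms c \<alpha> \<beta>c \<delta>c \<phi> \<psi> \<and>
                   dmp_feasible Bs Ss Ls Ms c P L2 \<alpha> \<beta>c \<gamma> \<delta>c \<mu> \<phi> \<psi>);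
         liftOK = (\<exists>\<alpha>' \<beta>' \<gamma>' \<delta>' \<mu>' \<phi>' \<psi>'.
                     cost_invariant_lifting Bs k Ilo Ihi L1 Lb \<alpha> \<beta> \<gamma> \<delta> \<mu> \<phi> \<psi> \<alpha>' \<beta>' \<gamma>' \<delta>' \<mu>' \<phi>' \<psi>' \<and>
                     dmp_xcons Bs Ss Ls Ms c \<alpha>' \<beta>' \<delta>' \<phi>' \<psi>' \<and>
                     dmp_feasible Bs Ss Ls Ms c P L2 \<alpha>' \<beta>' \<gamma>' \<delta>' \<mu>' \<phi>' \<psi>');
         fam1 = (\<forall>b\<in>Bs. \<forall>l\<in>Lb b. \<forall>m\<in>Ms - Mb b l. rc b l m \<ge> 0);
         fam2 = (\<forall>l\<in>L1 - (\<Inter>b\<in>Bs. Lb b).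
                   - (\<Sum>b\<in>{b\<in>Bs. l \<notin> Lb b}. negp (Min ((\<lambda>m. rc b l m) ` Ms)))
                   \<ge> (\<Sum>b\<in>{b\<in>Bs. l \<in> Lb b}. \<beta> b l) - \<gamma> - \<delta> l + chi L2 l * \<mu>);
         fam3 = (\<forall>l\<in>Ls - L1.
                   - (\<Sum>b\<in>Bs. negp (Min ((\<lambda>m. rc b l m) ` Ms)))
                   + posp (Min ((\<lambda>(b, m). rc b l m) ` (Bs \<times> Ms)))
                   \<ge> - \<gamma> + \<mu>)
     in (liftOK \<longleftrightarrow> charOK) \<and>
        ((fam1 \<and> fam2 \<and> fam3) \<longrightarrow>
           mp_optimal Bs Ss Ls Ms c k Ilo Ihi P L2 (xbar Bs Lb Mb x) (ybar L1 y) p) \<and>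
        ((fam1 \<and> fam2 \<and> fam3) \<longleftrightarrow> charOK) \<and>
        (\<not> (fam1 \<and> fam2 \<and> fam3) \<longrightarrow> \<not> liftOK)"
proof -
  interpret drmp_feasible_point Bs Ss Ls Ms c P L1 L2 Lb Mb \<alpha> \<beta> \<gamma> \<delta> \<mu> \<phi> \<psi>
    using fin L_sub dual_opt unfolding drmp_optimal_def by unfold_locales blast+
  have "dmp_feasible Bs Ss Ls Ms c P L2 \<alpha> \<beta>c \<gamma> \<delta>c \<mu> \<phi> \<psi> \<Longrightarrow>
      mp_optimal Bs Ss Ls Ms c k Ilo Ihi P L2 (xbar Bs Lb Mb x) (ybar L1 y) p"
    using primal_opt M_sub fin L_sub same_value unfolding rmp_optimal_def
    by (intro mp_optimal_zero_extension) auto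
  then show ?thesis
    unfolding Let_def compensating_lifting_exists_iff char_lifting_feasible_iff
      char_lifting_x_constraints_iff missing_multiplicity_condition_def partial_lot_condition_def missing_lot_condition_def
    by blast
qed

end
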